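(* Let $L$ be an $S$-Noetherian lattice, where $S$ is a multiplicatively closed subset of $L$ with $1\in S$, $0\notin S$. Let $q_1,\dots,q_n\in L$ and let $p$ be an $S$-prime element of $L$ such that $\bigwedge_{i=1}^n q_i\le p$. Then there exist $s\in S$ and an index $k$ such that $sq_k\le p$. In particular, if $p=\bigwedge_{i=1}^n q_i$, then there exist $s\in S$ and $k$ such that $sq_k\le p\le q_k$.
   Context: A multiplicative lattice is a complete lattice with a commutative, associative multiplication distributing over arbitrary joins, with $1$ as identity; $L_*$ is the set of compact elements; $(a:b)=\bigvee\{x\mid xb\le a\}$. An element $m$ is principal if $a\wedge mb=m((a:m)\wedge b)$ and $a\vee(b:m)=(am\vee b):m$ for all $a,b$. An $r$-lattice is a modular, principally generated, compactly generated multiplicative lattice with $1$ compact. A multiplicatively closed subset is a nonempty $S\subseteq L_*$ closed under multiplication. An element $a$ is $S$-compact if $sa\le b\le a$ for some compact $b$ and $s\in S$; an $S$-Noetherian lattice is an $r$-lattice in which every element is $S$-compact. A proper element $p$ with $t\not\le p$ for all $t\in S$ is $S$-prime if there exists $s\in S$ such that for all $a,b\in L$, $ab\le p$ implies $sa\le p$ or $sb\le p$. *)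

theory Defs
  imports Main
begin

definition mult_lattice :: "('a::complete_lattice \<Rightarrow> 'a \<Rightarrow> 'a) \<Rightarrow> bool" where
  "mult_lattice m \<longleftrightarrow>
     (\<forall>a b. m a b = m b a) \<and>
     (\<forall>a b c. m (m a b) c = m a (m b c)) \<and>
     (\<forall>a X. m a (Sup X) = Sup ((m a) ` X)) \<and>
     (\<forall>a. m top a = a)"

definition compact_el :: "'a::complete_lattice \<Rightarrow> bool" where
  "compact_el x \<longleftrightarrow> (\<forall>X. x \<le> Sup X \<longrightarrow> (\<exists>F. F \<subseteq> X \<and> finite F \<and> x \<le> Sup F))"

definition lres :: "('a::complete_lattice \<Rightarrow> 'a \<Rightarrow> 'a) \<Rightarrow> 'a \<Rightarrow> 'a \<Rightarrow> 'a" where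
  "lres m a b = Sup {x. m x b \<le> a}"

definition principal_el :: "('a::complete_lattice \<Rightarrow> 'a \<Rightarrow> 'a) \<Rightarrow> 'a \<Rightarrow> bool" where
  "principal_el m e \<longleftrightarrow>
     (\<forall>a b. inf a (m e b) = m e (inf (lres m a e) b)) \<and>
     (\<forall>a b. sup a (lres m b e) = lres m (sup (m a e) b) e)"

definition modular_lat :: "'a::complete_lattice itself \<Rightarrow> bool" where
  "modular_lat _ \<longleftrightarrow> (\<forall>a b c::'a. a \<le> c \<longrightarrow> sup a (inf b c) = inf (sup a b) c)"

definition r_lattice :: "('a::complete_lattice \<Rightarrow> 'a \<Rightarrow> 'a) \<Rightarrow> bool" where
  "r_lattice m \<longleftrightarrow>
     mult_lattice m \<and> modular_lat TYPE('a) \<and>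
     (\<forall>a::'a. \<exists>X. (\<forall>x\<in>X. principal_el m x) \<and> a = Sup X) \<and>
     (\<forall>a::'a. \<exists>X. (\<forall>x\<in>X. compact_el x) \<and> a = Sup X) \<and>
     compact_el (top::'a)"

definition mult_closed :: "('a::complete_lattice \<Rightarrow> 'a \<Rightarrow> 'a) \<Rightarrow> 'a set \<Rightarrow> bool" where
  "mult_closed m S \<longleftrightarrow> S \<noteq> {} \<and> (\<forall>s\<in>S. compact_el s) \<and> (\<forall>s\<in>S. \<forall>t\<in>S. m s t \<in> S)"

definition S_compact :: "('a::complete_lattice \<Rightarrow> 'a \<Rightarrow> 'a) \<Rightarrow> 'a set \<Rightarrow> 'a \<Rightarrow> bool" where
  "S_compact m S a \<longleftrightarrow> (\<exists>s\<in>S. \<exists>b. compact_el b \<and> m s a \<le> b \<and> b \<le> a)"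

definition S_Noetherian :: "('a::complete_lattice \<Rightarrow> 'a \<Rightarrow> 'a) \<Rightarrow> 'a set \<Rightarrow> bool" where
  "S_Noetherian m S \<longleftrightarrow> r_lattice m \<and> (\<forall>a. S_compact m S a)"

definition S_prime :: "('a::complete_lattice \<Rightarrow> 'a \<Rightarrow> 'a) \<Rightarrow> 'a set \<Rightarrow> 'a \<Rightarrow> bool" where
  "S_prime m S p \<longleftrightarrow> p \<noteq> top \<and> (\<forall>t\<in>S. \<not> t \<le> p) \<and>
     (\<exists>s\<in>S. \<forall>a b. m a b \<le> p \<longrightarrow> m s a \<le> p \<or> m s b \<le> p)"

end

theory Submission
  imports Defs
begin

text \<open>The product \<open>q\<^sub>1 \<cdots> q\<^sub>n\<close> lies below \<open>\<Sqinter>\<^sub>i q\<^sub>i\<close>, hence below \<open>p\<close>. Peeling off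
one factor at a time with the \<open>S\<close>-primeness of \<open>p\<close> yields some \<open>s q\<^sub>k \<le> p\<close>; the
multipliers accumulated along the way stay in \<open>S\<close> because \<open>S\<close> is multiplicatively
closed.\<close>

lemma S_Noetherian_mult_lattice: "S_Noetherian m S \<Longrightarrow> mult_lattice m"
  unfolding S_Noetherian_def r_lattice_def by blast

context
  fixes m :: "'a::complete_lattice \<Rightarrow> 'a \<Rightarrow> 'a"
  assumes ml: "mult_lattice m"
begin

lemma mult_lattice_commute: "m a b = m b a"
  using ml unfolding mult_lattice_def by blast

lemma mult_lattice_assoc: "m (m a b) c = m a (m b c)"
  using ml unfolding mult_lattice_def by blast

lemma mult_lattice_Sup_distrib: "m a (Sup X) = Sup (m a ` X)"
  using ml unfolding mult_lattice_def by blast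

lemma mult_lattice_top_right: "m a top = a"
  using ml mult_lattice_commute unfolding mult_lattice_def by metis

lemma mult_lattice_sup_distrib: "m c (sup a b) = sup (m c a) (m c b)"
  using mult_lattice_Sup_distrib[of c "{a, b}"] by simp

lemma mult_lattice_mono: "a \<le> b \<Longrightarrow> m c a \<le> m c b"
  by (metis mult_lattice_sup_distrib le_iff_sup)

lemma mult_lattice_le_left: "m a b \<le> a"
  using mult_lattice_mono[of b top a] mult_lattice_top_right by simp

lemma mult_lattice_le_right: "m a b \<le> b"
  using mult_lattice_le_left mult_lattice_commute by metis

end

fun mult_prod :: "('a::complete_lattice \<Rightarrow> 'a \<Rightarrow> 'a) \<Rightarrow> (nat \<Rightarrow> 'a) \<Rightarrow> nat \<Rightarrow> 'a" where
  "mult_prod m q 0 = top"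
| "mult_prod m q (Suc k) = m (mult_prod m q k) (q (Suc k))"

lemma mult_prod_le:
  assumes ml: "mult_lattice m" and "i \<in> {1..k}"
  shows "mult_prod m q k \<le> q i"
  using assms(2)
proof (induction k)
  case 0
  then show ?case by simp
next
  case (Suc k)
  show ?case
  proof (cases "i = Suc k")
    case True
    then show ?thesis by (simp add: mult_lattice_le_right[OF ml])
  next
    case False
    with Suc have "mult_prod m q k \<le> q i" by auto
    then show ?thesis using mult_lattice_le_left[OF ml] by (auto intro: order_trans)
  qed
qed

lemma mult_prod_le_INF: "mult_lattice m \<Longrightarrow> mult_prod m q k \<le> (INF i\<in>{1..k}. q i)"
  by (simp add: mult_prod_le le_INF_iff)

lemma S_prime_mult_prod_factor:
  assumes ml: "mult_lattice m" and mc: "mult_closed m S" and sp: "S_prime m S p"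
    and "t \<in> S" and "m t (mult_prod m q k) \<le> p"
  shows "\<exists>s\<in>S. \<exists>i\<in>{1..k}. m s (q i) \<le> p"
  using assms(4,5)
proof (induction k arbitrary: t)
  case 0
  then show ?case using sp mult_lattice_top_right[OF ml] unfolding S_prime_def by auto
next
  case (Suc k t)
  obtain s where s: "s \<in> S" "\<And>a b. m a b \<le> p \<Longrightarrow> m s a \<le> p \<or> m s b \<le> p"
    using sp unfolding S_prime_def by blast
  have "m (m t (mult_prod m q k)) (q (Suc k)) \<le> p"
    using Suc.prems by (simp add: mult_lattice_assoc[OF ml])
  then consider "m (m s t) (mult_prod m q k) \<le> p" | "m s (q (Suc k)) \<le> p"
    using s(2) mult_lattice_assoc[OF ml] by metis
  then show ?case
  proof cases
    case 1
    moreover have "m s t \<in> S"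
      using mc s(1) Suc.prems(1) unfolding mult_closed_def by blast
    ultimately show ?thesis using Suc.IH by fastforce
  next
    case 2
    then show ?thesis using s(1) by fastforce
  qed
qed

lemma S_prime_INF_factor:
  fixes q :: "nat \<Rightarrow> 'a::complete_lattice"
  assumes ml: "mult_lattice m" and mc: "mult_closed m S" and sp: "S_prime m S p"
    and "(INF i\<in>{1..n}. q i) \<le> p"
  shows "\<exists>s\<in>S. \<exists>k\<in>{1..n}. m s (q k) \<le> p"
proof -
  obtain t where "t \<in> S"
    using mc unfolding mult_closed_def by blast
  moreover have "m t (mult_prod m q n) \<le> p"
    using mult_lattice_le_right[OF ml] mult_prod_le_INF[OF ml] assms(4) by (blast intro: order_trans)
  ultimately show ?thesis
    using S_prime_mult_prod_factor[OF ml mc sp] by blast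
qed

theorem mainTheorem10:
  fixes m :: "'a::complete_lattice \<Rightarrow> 'a \<Rightarrow> 'a"
    and S :: "'a set" and q :: "nat \<Rightarrow> 'a" and n :: nat and p :: 'a
  assumes "S_Noetherian m S"
    and "mult_closed m S"
    and "top \<in> S" and "bot \<notin> S"
    and "S_prime m S p"
    and "(INF i\<in>{1..n}. q i) \<le> p"
  shows "(\<exists>s\<in>S. \<exists>k\<in>{1..n}. m s (q k) \<le> p) \<and>
         (p = (INF i\<in>{1..n}. q i) \<longrightarrow> (\<exists>s\<in>S. \<exists>k\<in>{1..n}. m s (q k) \<le> p \<and> p \<le> q k))"
proof -
  have factor: "\<exists>s\<in>S. \<exists>k\<in>{1..n}. m s (q k) \<le> p"
    using S_prime_INF_factor[OF S_Noetherian_mult_lattice[OF assms(1)] assms(2,5,6)] .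
  have "p \<le> q k" if "p = (INF i\<in>{1..n}. q i)" "k \<in> {1..n}" for k
    using that by (simp add: INF_lower)
  with factor show ?thesis by blast
qed

end
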